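(* The function $H_2$ is given by the formula $$ H_2(z)=\frac{1}{2}\frac{(1-\vert z\vert^2)^4}{\vert1-z\vert^2} +\frac{1}{2}\frac{(1-\vert z\vert^2)^5}{\vert1-z\vert^4} -\frac{1}{4}\frac{(1-\vert z\vert^2)^4}{\vert1-z\vert^4} +\frac{1}{6}\frac{(1-\vert z\vert^2)^6}{\vert1-z\vert^6}, \quad z\in\mathbb{D}. $$
   Context: Let $\mathbb{D}$ be the unit disc, $\mathbb{T}=\partial\mathbb{D}$ the unit circle, $\Delta=\partial^2/\partial z\partial\bar z$, and for $\gamma>-1$ let $w_\gamma(z)=(1-\lvert z\rvert^2)^\gamma$, $z\in\mathbb{D}$. For a smooth function $u$ in $\mathbb{D}$ write $u_r(e^{i\theta})=u(re^{i\theta})$ for $0\le r<1$. We say $u=f_0$ on $\mathbb{T}$ (with $f_0\in\mathcal{D}'(\mathbb{T})$) if $\lim_{r\to1}u_r=f_0$ in $\mathcal{D}'(\mathbb{T})$, and the inward normal derivative is $\partial_n u=\lim_{r\to1}(u_r-f_0)/(1-r)$ in $\mathcal{D}'(\mathbb{T})$ when the limit exists. The Poisson kernel $H_\gamma$ is the (unique) solution, in this distributional sense, of $\Delta w_\gamma^{-1}\Delta H_\gamma=0$ in $\mathbb{D}$, $H_\gamma=0$ on $\mathbb{T}$, $\partial_n H_\gamma=\delta_1$ on $\mathbb{T}$, where $\delta_1$ is the unit Dirac mass at $1\in\mathbb{T}$. Here $\gamma=2$. *)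

theory Defs
  imports "HOL-Analysis.Analysis"
begin

definition dx :: "(complex \<Rightarrow> real) \<Rightarrow> complex \<Rightarrow> real" where
  "dx f z = deriv (\<lambda>t::real. f (z + of_real t)) 0"

definition dy :: "(complex \<Rightarrow> real) \<Rightarrow> complex \<Rightarrow> real" where
  "dy f z = deriv (\<lambda>t::real. f (z + \<i> * of_real t)) 0"

text \<open>Delta = d^2/(dz dzbar) = (1/4)(d^2/dx^2 + d^2/dy^2).\<close>
definition Lap :: "(complex \<Rightarrow> real) \<Rightarrow> complex \<Rightarrow> real" where
  "Lap f z = (dx (dx f) z + dy (dy f) z) / 4"

coinductive smooth_on :: "complex set \<Rightarrow> (complex \<Rightarrow> real) \<Rightarrow> bool" where
  "f differentiable_on S \<Longrightarrow> smooth_on S (dx f) \<Longrightarrow> smooth_on S (dy f) \<Longrightarrow> smooth_on S f"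

coinductive smooth_real :: "(real \<Rightarrow> real) \<Rightarrow> bool" where
  "(\<forall>x. f differentiable (at x)) \<Longrightarrow> smooth_real (deriv f) \<Longrightarrow> smooth_real f"

text \<open>Test functions on the unit circle T, written in the angle variable:
  2pi-periodic C-infinity functions on the real line.\<close>
definition test_fun_T :: "(real \<Rightarrow> real) \<Rightarrow> bool" where
  "test_fun_T \<phi> \<longleftrightarrow> smooth_real \<phi> \<and> (\<forall>\<theta>. \<phi> (\<theta> + 2 * pi) = \<phi> \<theta>)"

definition pair_r :: "(complex \<Rightarrow> real) \<Rightarrow> real \<Rightarrow> (real \<Rightarrow> real) \<Rightarrow> real" where
  "pair_r u r \<phi> = integral {0..2*pi} (\<lambda>\<theta>. u (of_real r * cis \<theta>) * \<phi> \<theta>) / (2 * pi)"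

definition w :: "real \<Rightarrow> complex \<Rightarrow> real" where
  "w \<gamma> z = (1 - (cmod z)\<^sup>2) powr \<gamma>"

text \<open>H solves the Poisson-kernel problem for the weight w_gamma:
  smooth in D, Delta w^{-1} Delta H = 0 in D, H = 0 on T and d_n H = delta_1 on T (distributionally).\<close>
definition is_poisson_kernel :: "real \<Rightarrow> (complex \<Rightarrow> real) \<Rightarrow> bool" where
  "is_poisson_kernel \<gamma> H \<longleftrightarrow>
     smooth_on (ball 0 1) H \<and>
     (\<forall>z\<in>ball 0 1. Lap (\<lambda>\<zeta>. Lap H \<zeta> / w \<gamma> \<zeta>) z = 0) \<and>
     (\<forall>\<phi>. test_fun_T \<phi> \<longrightarrow> ((\<lambda>r. pair_r H r \<phi>) \<longlongrightarrow> 0) (at_left 1)) \<and>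
     (\<forall>\<phi>. test_fun_T \<phi> \<longrightarrow> ((\<lambda>r. (pair_r H r \<phi> - 0) / (1 - r)) \<longlongrightarrow> \<phi> 0) (at_left 1))"

end

theory Submission
  imports Defs "HOL-Complex_Analysis.Complex_Analysis" "HOL-Real_Asymp.Real_Asymp"
begin

text \<open>Write \<open>H2 = Phi (1 - \<bar>z\<bar>\<^sup>2) (1 / \<bar>1 - z\<bar>\<^sup>2)\<close> with a polynomial \<open>Phi\<close>. It is smooth in the
  disc because polynomials in \<open>Re z\<close>, \<open>Im z\<close> and \<open>1 / \<bar>1 - z\<bar>\<^sup>2\<close> are closed under partial derivatives.
  The chain rule and an algebraic identity give \<open>\<Delta> H2 = (1 - \<bar>z\<bar>\<^sup>2)\<^sup>2 Re (3/2 - 3 / (1 - z)\<^sup>4)\<close>,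
  so \<open>\<Delta> H2 / w\<^sub>2\<close> is the real part of a holomorphic function and hence harmonic.
  On the circle of radius \<open>r\<close>, \<open>H2\<close> is a combination of \<open>\<bar>1 - z\<bar>\<^sup>-\<^sup>2\<^sup>k\<close>, \<open>k = 1, 2, 3\<close>, with
  coefficients of order \<open>(1 - r)\<^sup>4\<close>; Cauchy's formula evaluates their integrals and shows that the mean of
  \<open>H2\<close> over the circle is \<open>(1 - r) + o(1 - r)\<close>. Since a test function \<open>\<phi>\<close> satisfies
  \<open>\<bar>\<phi> t - \<phi> 0\<bar> \<le> B \<bar>1 - e\<^sup>i\<^sup>t\<bar>\<close>, and the mass of \<open>H2\<close> concentrates at \<open>1\<close>, the remaining part of the
  pairing is \<open>o(1 - r)\<close>; this gives both boundary conditions.\<close>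

lemma eventually_line_in_open:
  fixes z c :: complex
  assumes "open S" "z \<in> S"
  shows "eventually (\<lambda>t::real. z + c * of_real t \<in> S) (nhds 0)"
proof -
  have "open ((\<lambda>t::real. z + c * of_real t) -` S)"
    by (intro continuous_open_vimage assms(1)) (auto intro!: continuous_intros)
  from eventually_nhds_in_open[OF this] show ?thesis using assms(2) by simp
qed

lemma dx_cong_open:
  assumes "open S" "z \<in> S" "\<And>\<zeta>. \<zeta> \<in> S \<Longrightarrow> f \<zeta> = g \<zeta>"
  shows "dx f z = dx g z"
  unfolding dx_def using eventually_line_in_open[OF assms(1,2), of 1]
  by (intro deriv_cong_ev) (auto elim!: eventually_mono simp: assms(3))

lemma dy_cong_open:
  assumes "open S" "z \<in> S" "\<And>\<zeta>. \<zeta> \<in> S \<Longrightarrow> f \<zeta> = g \<zeta>"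
  shows "dy f z = dy g z"
  unfolding dy_def using eventually_line_in_open[OF assms(1,2), of \<i>]
  by (intro deriv_cong_ev) (auto elim!: eventually_mono simp: assms(3))

lemma Lap_cong_open:
  assumes "open S" "z \<in> S" "\<And>\<zeta>. \<zeta> \<in> S \<Longrightarrow> f \<zeta> = g \<zeta>"
  shows "Lap f z = Lap g z"
proof -
  have "dx (dx f) z = dx (dx g) z" "dy (dy f) z = dy (dy g) z"
    using assms by (auto intro!: dx_cong_open dy_cong_open)
  then show ?thesis unfolding Lap_def by simp
qed

lemma dx_eqI: "((\<lambda>t. f (z + of_real t)) has_real_derivative D) (at 0) \<Longrightarrow> dx f z = D"
  unfolding dx_def by (rule DERIV_imp_deriv)

lemma dy_eqI: "((\<lambda>t. f (z + \<i> * of_real t)) has_real_derivative D) (at 0) \<Longrightarrow> dy f z = D"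
  unfolding dy_def by (rule DERIV_imp_deriv)

lemma has_real_derivative_Re_line:
  assumes "(F has_field_derivative D) (at z)"
  shows "((\<lambda>t. Re (F (z + c * of_real t))) has_real_derivative Re (c * D)) (at 0)"
proof -
  have line: "((\<lambda>w. z + c * w) has_field_derivative c) (at (of_real 0))"
    by (auto intro!: derivative_eq_intros)
  have "(F has_field_derivative D) (at ((\<lambda>w. z + c * w) (of_real 0)))"
    using assms by simp
  from DERIV_chain2[OF this line]
  have "((\<lambda>w. F (z + c * w)) has_field_derivative D * c) (at (of_real 0))"
    by (simp add: o_def)
  then have "((\<lambda>t. F (z + c * of_real t)) has_vector_derivative D * c) (at 0)"
    by (rule has_vector_derivative_real_field)
  then have "((\<lambda>t. Re (F (z + c * of_real t))) has_real_derivative Re (D * c)) (at 0)"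
    by (rule has_field_derivative_Re)
  then show ?thesis by (simp only: mult.commute)
qed

lemma Lap_Re_holomorphic:
  assumes S: "open S" "z \<in> S"
    and F': "\<And>\<zeta>. \<zeta> \<in> S \<Longrightarrow> (F has_field_derivative F1 \<zeta>) (at \<zeta>)"
    and F'': "\<And>\<zeta>. \<zeta> \<in> S \<Longrightarrow> (F1 has_field_derivative F2 \<zeta>) (at \<zeta>)"
  shows "Lap (\<lambda>\<zeta>. Re (F \<zeta>)) z = 0"
proof -
  have "dx (\<lambda>\<zeta>. Re (F \<zeta>)) \<zeta> = Re (F1 \<zeta>)" "dy (\<lambda>\<zeta>. Re (F \<zeta>)) \<zeta> = Re (\<i> * F1 \<zeta>)"
    if "\<zeta> \<in> S" for \<zeta>
    using has_real_derivative_Re_line[OF F'[OF that], of 1] has_real_derivative_Re_line[OF F'[OF that], of \<i>]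
    by (auto intro: dx_eqI dy_eqI)
  then have "dx (dx (\<lambda>\<zeta>. Re (F \<zeta>))) z = dx (\<lambda>\<zeta>. Re (F1 \<zeta>)) z"
    and "dy (dy (\<lambda>\<zeta>. Re (F \<zeta>))) z = dy (\<lambda>\<zeta>. Re (\<i> * F1 \<zeta>)) z"
    using S by (auto intro!: dx_cong_open dy_cong_open)
  moreover have "dx (\<lambda>\<zeta>. Re (F1 \<zeta>)) z = Re (F2 z)"
    using has_real_derivative_Re_line[OF F''[OF S(2)], of 1] by (auto intro: dx_eqI)
  moreover have "dy (\<lambda>\<zeta>. Re (\<i> * F1 \<zeta>)) z = - Re (F2 z)"
  proof -
    have "((\<lambda>\<zeta>. \<i> * F1 \<zeta>) has_field_derivative \<i> * F2 z) (at z)"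
      using F''[OF S(2)] by (auto intro!: derivative_eq_intros)
    from has_real_derivative_Re_line[OF this, of \<i>] show ?thesis
      by (auto dest: dy_eqI)
  qed
  ultimately show ?thesis unfolding Lap_def by simp
qed

definition sqdist1 :: "complex \<Rightarrow> real" where
  "sqdist1 z = (1 - Re z)\<^sup>2 + (Im z)\<^sup>2"

lemma sqdist1_eq_cmod: "sqdist1 z = (cmod (1 - z))\<^sup>2"
  unfolding sqdist1_def cmod_power2 by simp

lemma sqdist1_pos: "z \<noteq> 1 \<Longrightarrow> sqdist1 z > 0"
  unfolding sqdist1_eq_cmod by simp

lemma sqdist1_differentiable: "sqdist1 differentiable (at z)"
  unfolding sqdist1_def
  by (intro derivative_intros) (auto intro!: bounded_linear_imp_differentiable bounded_linear_Re bounded_linear_Im)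

lemma has_real_derivative_sqdist1_line:
  "((\<lambda>t. sqdist1 (z + c * of_real t)) has_real_derivative
      2 * Im z * Im c - 2 * (1 - Re z) * Re c) (at 0)"
  unfolding sqdist1_def by (auto intro!: derivative_eq_intros)

inductive qpoly :: "(complex \<Rightarrow> real) \<Rightarrow> bool" where
  qpoly_const: "qpoly (\<lambda>z. c)"
| qpoly_Re: "qpoly Re"
| qpoly_Im: "qpoly Im"
| qpoly_inverse_sqdist1: "qpoly (\<lambda>z. 1 / sqdist1 z)"
| qpoly_add: "qpoly f \<Longrightarrow> qpoly g \<Longrightarrow> qpoly (\<lambda>z. f z + g z)"
| qpoly_mult: "qpoly f \<Longrightarrow> qpoly g \<Longrightarrow> qpoly (\<lambda>z. f z * g z)"

lemma qpoly_power: "qpoly f \<Longrightarrow> qpoly (\<lambda>z. f z ^ n)"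
  by (induction n) (auto intro: qpoly.intros)

lemma qpoly_diff:
  assumes "qpoly f" "qpoly g"
  shows "qpoly (\<lambda>z. f z - g z)"
  using qpoly_add[OF assms(1) qpoly_mult[OF qpoly_const[of "-1"] assms(2)]] by simp

lemma qpoly_differentiable: "qpoly f \<Longrightarrow> z \<noteq> 1 \<Longrightarrow> f differentiable (at z)"
proof (induction rule: qpoly.induct)
  case qpoly_inverse_sqdist1
  then show ?case
    using sqdist1_pos[of z] by (intro differentiable_divide sqdist1_differentiable) auto
next
  case qpoly_Re
  show ?case by (intro bounded_linear_imp_differentiable bounded_linear_Re)
next
  case qpoly_Im
  show ?case by (intro bounded_linear_imp_differentiable bounded_linear_Im)
qed auto

lemma qpoly_line_derivative:
  "qpoly f \<Longrightarrow> \<exists>f'. qpoly f' \<and>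
     (\<forall>z. z \<noteq> 1 \<longrightarrow> ((\<lambda>t. f (z + c * of_real t)) has_real_derivative f' z) (at 0))"
proof (induction rule: qpoly.induct)
  case (qpoly_const a)
  show ?case by (intro exI[of _ "\<lambda>z. 0"]) (auto intro: qpoly.intros)
next
  case qpoly_Re
  show ?case by (intro exI[of _ "\<lambda>z. Re c"]) (auto intro!: qpoly.intros derivative_eq_intros)
next
  case qpoly_Im
  show ?case by (intro exI[of _ "\<lambda>z. Im c"]) (auto intro!: qpoly.intros derivative_eq_intros)
next
  case qpoly_inverse_sqdist1
  let ?f' = "\<lambda>z. (2 * (1 - Re z) * Re c - 2 * Im z * Im c) * ((1 / sqdist1 z) * (1 / sqdist1 z))"
  have "qpoly ?f'"
    by (intro qpoly.intros qpoly_diff)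
  moreover have "((\<lambda>t. 1 / sqdist1 (z + c * of_real t)) has_real_derivative ?f' z) (at 0)"
    if "z \<noteq> 1" for z
    using sqdist1_pos[OF that]
    by (auto intro!: derivative_eq_intros has_real_derivative_sqdist1_line
        simp: field_simps power2_eq_square)
  ultimately show ?case by blast
next
  case (qpoly_add f g)
  then obtain f' g' where "qpoly f'" "qpoly g'"
    and "\<forall>z. z \<noteq> 1 \<longrightarrow> ((\<lambda>t. f (z + c * of_real t)) has_real_derivative f' z) (at 0)"
    and "\<forall>z. z \<noteq> 1 \<longrightarrow> ((\<lambda>t. g (z + c * of_real t)) has_real_derivative g' z) (at 0)"
    by blast
  then show ?case
    by (intro exI[of _ "\<lambda>z. f' z + g' z"]) (auto intro!: qpoly.intros derivative_eq_intros)
next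
  case (qpoly_mult f g)
  then obtain f' g' where "qpoly f'" "qpoly g'"
    and "\<forall>z. z \<noteq> 1 \<longrightarrow> ((\<lambda>t. f (z + c * of_real t)) has_real_derivative f' z) (at 0)"
    and "\<forall>z. z \<noteq> 1 \<longrightarrow> ((\<lambda>t. g (z + c * of_real t)) has_real_derivative g' z) (at 0)"
    by blast
  with qpoly_mult.hyps show ?case
    by (intro exI[of _ "\<lambda>z. f' z * g z + f z * g' z"]) (auto intro!: qpoly.intros derivative_eq_intros)
qed

lemma qpoly_dx:
  assumes "qpoly g"
  shows "\<exists>g'. qpoly g' \<and> (\<forall>z. z \<noteq> 1 \<longrightarrow> dx g z = g' z)"
proof -
  obtain g' where "qpoly g'"
    and g': "\<forall>z. z \<noteq> 1 \<longrightarrow> ((\<lambda>t. g (z + of_real t)) has_real_derivative g' z) (at 0)"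
    using qpoly_line_derivative[OF assms, of 1] unfolding mult_1 by blast
  have "dx g z = g' z" if "z \<noteq> 1" for z
    using g'[rule_format, OF that] by (rule dx_eqI)
  with \<open>qpoly g'\<close> show ?thesis by blast
qed

lemma qpoly_dy:
  assumes "qpoly g"
  shows "\<exists>g'. qpoly g' \<and> (\<forall>z. z \<noteq> 1 \<longrightarrow> dy g z = g' z)"
proof -
  obtain g' where "qpoly g'"
    and g': "\<forall>z. z \<noteq> 1 \<longrightarrow> ((\<lambda>t. g (z + \<i> * of_real t)) has_real_derivative g' z) (at 0)"
    using qpoly_line_derivative[OF assms] by blast
  have "dy g z = g' z" if "z \<noteq> 1" for z
    using g'[rule_format, OF that] by (rule dy_eqI)
  with \<open>qpoly g'\<close> show ?thesis by blast
qed

lemma smooth_on_if_eq_qpoly: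
  assumes S: "open S" "1 \<notin> S" and g: "qpoly g" and eq: "\<And>z. z \<in> S \<Longrightarrow> f z = g z"
  shows "smooth_on S f"
proof -
  define X where "X T h \<longleftrightarrow> T = S \<and> (\<exists>g. qpoly g \<and> (\<forall>z\<in>S. h z = g z))" for T h
  have "X S f" unfolding X_def using g eq by blast
  then show ?thesis
  proof (rule smooth_on.coinduct[of X])
    fix T f assume "X T f"
    then obtain g where T: "T = S" and g: "qpoly g" "\<And>z. z \<in> S \<Longrightarrow> f z = g z"
      unfolding X_def by blast
    have "f differentiable at z" if z: "z \<in> S" for z
    proof -
      obtain D where "(g has_derivative D) (at z)"
        using qpoly_differentiable[OF g(1), of z] z S(2) unfolding differentiable_def by auto
      then have "(f has_derivative D) (at z)"
        by (rule has_derivative_transform_within_open) (use z g(2) S(1) in auto)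
      then show ?thesis unfolding differentiable_def by blast
    qed
    then have "f differentiable_on S"
      by (simp add: differentiable_at_imp_differentiable_on)
    moreover have "X S (dx f)"
    proof -
      obtain g' where "qpoly g'" and g': "\<And>z. z \<noteq> 1 \<Longrightarrow> dx g z = g' z"
        using qpoly_dx[OF g(1)] by blast
      have "dx f z = g' z" if "z \<in> S" for z
      proof -
        have "z \<noteq> 1" using that S(2) by auto
        then show ?thesis using dx_cong_open[OF S(1) that g(2)] g' by simp
      qed
      with \<open>qpoly g'\<close> show ?thesis unfolding X_def by blast
    qed
    moreover have "X S (dy f)"
    proof -
      obtain g' where "qpoly g'" and g': "\<And>z. z \<noteq> 1 \<Longrightarrow> dy g z = g' z"
        using qpoly_dy[OF g(1)] by blast
      have "dy f z = g' z" if "z \<in> S" for z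
      proof -
        have "z \<noteq> 1" using that S(2) by auto
        then show ?thesis using dy_cong_open[OF S(1) that g(2)] g' by simp
      qed
      with \<open>qpoly g'\<close> show ?thesis unfolding X_def by blast
    qed
    ultimately show "\<exists>f' T'. T = T' \<and> f = f' \<and> f' differentiable_on T' \<and>
        (X T' (dx f') \<or> smooth_on T' (dx f')) \<and> (X T' (dy f') \<or> smooth_on T' (dy f'))"
      using T by blast
  qed
qed

definition H2 :: "complex \<Rightarrow> real" where
  "H2 z =
      (1/2) * (1 - (cmod z)\<^sup>2) ^ 4 / (cmod (1 - z))\<^sup>2
    + (1/2) * (1 - (cmod z)\<^sup>2) ^ 5 / (cmod (1 - z)) ^ 4
    - (1/4) * (1 - (cmod z)\<^sup>2) ^ 4 / (cmod (1 - z)) ^ 4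
    + (1/6) * (1 - (cmod z)\<^sup>2) ^ 6 / (cmod (1 - z)) ^ 6"

definition wt :: "complex \<Rightarrow> real" where
  "wt z = 1 - (Re z)\<^sup>2 - (Im z)\<^sup>2"

lemma wt_eq_cmod: "wt z = 1 - (cmod z)\<^sup>2"
  by (simp add: wt_def cmod_power2)

definition invq :: "complex \<Rightarrow> real" where
  "invq z = 1 / sqdist1 z"

definition Phi :: "real \<Rightarrow> real \<Rightarrow> real" where
  "Phi a u = (1/2) * a^4 * u + (1/2) * a^5 * u^2 - (1/4) * a^4 * u^2 + (1/6) * a^6 * u^3"

definition Phi_a :: "real \<Rightarrow> real \<Rightarrow> real" where
  "Phi_a a u = 2 * a^3 * u + (5/2) * a^4 * u^2 - a^3 * u^2 + a^5 * u^3"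

definition Phi_u :: "real \<Rightarrow> real \<Rightarrow> real" where
  "Phi_u a u = (1/2) * a^4 + a^5 * u - (1/2) * a^4 * u + (1/2) * a^6 * u^2"

definition Phi_aa :: "real \<Rightarrow> real \<Rightarrow> real" where
  "Phi_aa a u = 6 * a^2 * u + 10 * a^3 * u^2 - 3 * a^2 * u^2 + 5 * a^4 * u^3"

definition Phi_au :: "real \<Rightarrow> real \<Rightarrow> real" where
  "Phi_au a u = 2 * a^3 + 5 * a^4 * u - 2 * a^3 * u + 3 * a^5 * u^2"

definition Phi_uu :: "real \<Rightarrow> real \<Rightarrow> real" where
  "Phi_uu a u = a^5 - (1/2) * a^4 + a^6 * u"

lemma H2_eq_Phi: "H2 z = Phi (wt z) (invq z)"
proof -
  have "(cmod z)\<^sup>2 = (Re z)\<^sup>2 + (Im z)\<^sup>2" by (simp add: cmod_power2)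
  moreover have "(cmod (1 - z)) ^ (2 * k) = sqdist1 z ^ k" for k
    by (simp add: sqdist1_eq_cmod power_mult)
  from this[of 1] this[of 2] this[of 3]
  have "(cmod (1 - z))\<^sup>2 = sqdist1 z" "(cmod (1 - z)) ^ 4 = sqdist1 z ^ 2"
    "(cmod (1 - z)) ^ 6 = sqdist1 z ^ 3" by simp_all
  ultimately show ?thesis
    unfolding H2_def Phi_def wt_def invq_def by (simp add: diff_diff_eq power_one_over)
qed

lemma smooth_on_H2: "smooth_on (ball 0 1) H2"
proof (rule smooth_on_if_eq_qpoly)
  show "qpoly (\<lambda>z. Phi (wt z) (invq z))"
    unfolding Phi_def wt_def invq_def
    by (intro qpoly_add qpoly_diff qpoly_mult qpoly_power qpoly.intros)
qed (auto simp: H2_eq_Phi)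

lemma has_real_derivative_wt_line:
  "((\<lambda>t. wt (z + c * of_real t)) has_real_derivative - 2 * (Re z * Re c + Im z * Im c)) (at 0)"
  unfolding wt_def by (auto intro!: derivative_eq_intros)

lemma has_real_derivative_invq_line:
  assumes "z \<noteq> 1"
  shows "((\<lambda>t. invq (z + c * of_real t)) has_real_derivative
      2 * ((1 - Re z) * Re c - Im z * Im c) * (invq z)\<^sup>2) (at 0)"
  unfolding invq_def using sqdist1_pos[OF assms]
  by (auto intro!: derivative_eq_intros has_real_derivative_sqdist1_line
      simp: field_simps power2_eq_square)

definition H2_x :: "complex \<Rightarrow> real" where
  "H2_x z = Phi_a (wt z) (invq z) * (-2 * Re z) + Phi_u (wt z) (invq z) * (2 * (1 - Re z) * (invq z)\<^sup>2)"

definition H2_y :: "complex \<Rightarrow> real" where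
  "H2_y z = Phi_a (wt z) (invq z) * (-2 * Im z) + Phi_u (wt z) (invq z) * (-2 * Im z * (invq z)\<^sup>2)"

definition H2_xx :: "complex \<Rightarrow> real" where
  "H2_xx z =
     (Phi_aa (wt z) (invq z) * (-2 * Re z) + Phi_au (wt z) (invq z) * (2 * (1 - Re z) * (invq z)\<^sup>2)) * (-2 * Re z)
   + Phi_a (wt z) (invq z) * (-2)
   + (Phi_au (wt z) (invq z) * (-2 * Re z) + Phi_uu (wt z) (invq z) * (2 * (1 - Re z) * (invq z)\<^sup>2))
       * (2 * (1 - Re z) * (invq z)\<^sup>2)
   + Phi_u (wt z) (invq z) * (-2 * (invq z)\<^sup>2 + 2 * (1 - Re z) * (2 * invq z * (2 * (1 - Re z) * (invq z)\<^sup>2)))"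

definition H2_yy :: "complex \<Rightarrow> real" where
  "H2_yy z =
     (Phi_aa (wt z) (invq z) * (-2 * Im z) + Phi_au (wt z) (invq z) * (-2 * Im z * (invq z)\<^sup>2)) * (-2 * Im z)
   + Phi_a (wt z) (invq z) * (-2)
   + (Phi_au (wt z) (invq z) * (-2 * Im z) + Phi_uu (wt z) (invq z) * (-2 * Im z * (invq z)\<^sup>2))
       * (-2 * Im z * (invq z)\<^sup>2)
   + Phi_u (wt z) (invq z) * (-2 * (invq z)\<^sup>2 - 2 * Im z * (2 * invq z * (-2 * Im z * (invq z)\<^sup>2)))"

lemma dx_H2: "z \<noteq> 1 \<Longrightarrow> dx H2 z = H2_x z"
  using has_real_derivative_wt_line[of z 1] has_real_derivative_invq_line[of z 1]
  unfolding H2_eq_Phi Phi_def H2_x_def Phi_a_def Phi_u_def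
  by (intro dx_eqI) (auto intro!: derivative_eq_intros, simp add: field_simps)

lemma dy_H2: "z \<noteq> 1 \<Longrightarrow> dy H2 z = H2_y z"
  using has_real_derivative_wt_line[of z \<i>] has_real_derivative_invq_line[of z \<i>]
  unfolding H2_eq_Phi Phi_def H2_y_def Phi_a_def Phi_u_def
  by (intro dy_eqI) (auto intro!: derivative_eq_intros, simp add: field_simps)

lemma dx_H2_x: "z \<noteq> 1 \<Longrightarrow> dx H2_x z = H2_xx z"
  using has_real_derivative_wt_line[of z 1] has_real_derivative_invq_line[of z 1]
  unfolding H2_x_def H2_xx_def Phi_a_def Phi_u_def Phi_aa_def Phi_au_def Phi_uu_def
  by (intro dx_eqI) (auto intro!: derivative_eq_intros, simp add: field_simps)

lemma dy_H2_y: "z \<noteq> 1 \<Longrightarrow> dy H2_y z = H2_yy z"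
  using has_real_derivative_wt_line[of z \<i>] has_real_derivative_invq_line[of z \<i>]
  unfolding H2_y_def H2_yy_def Phi_a_def Phi_u_def Phi_aa_def Phi_au_def Phi_uu_def
  by (intro dy_eqI) (auto intro!: derivative_eq_intros, simp add: field_simps)

lemma Lap_H2_eq_second_derivatives:
  assumes "z \<noteq> 1"
  shows "Lap H2 z = (H2_xx z + H2_yy z) / 4"
proof -
  have "dx (dx H2) z = dx H2_x z" "dy (dy H2) z = dy H2_y z"
    using assms dx_H2 dy_H2 by (auto intro!: dx_cong_open[of "- {1}"] dy_cong_open[of "- {1}"])
  then show ?thesis
    unfolding Lap_def using dx_H2_x[OF assms] dy_H2_y[OF assms] by simp
qed

definition G_poly :: "real \<Rightarrow> real \<Rightarrow> real" where
  "G_poly a u = 3/2 - 3 * ((a * u + 1)^4 / 2 - 2 * u * (a * u + 1)^2 + u^2)"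

lemma second_derivatives_identity:
  fixes a u x y :: real
  assumes a: "a = 1 - x\<^sup>2 - y\<^sup>2" and u: "u * ((1 - x)\<^sup>2 + y\<^sup>2) = 1"
  shows "(Phi_aa a u * (-2 * x) + Phi_au a u * (2 * (1 - x) * u\<^sup>2)) * (-2 * x)
     + Phi_a a u * (-2)
     + (Phi_au a u * (-2 * x) + Phi_uu a u * (2 * (1 - x) * u\<^sup>2)) * (2 * (1 - x) * u\<^sup>2)
     + Phi_u a u * (-2 * u\<^sup>2 + 2 * (1 - x) * (2 * u * (2 * (1 - x) * u\<^sup>2)))
   + ((Phi_aa a u * (-2 * y) + Phi_au a u * (-2 * y * u\<^sup>2)) * (-2 * y)
     + Phi_a a u * (-2)
     + (Phi_au a u * (-2 * y) + Phi_uu a u * (-2 * y * u\<^sup>2)) * (-2 * y * u\<^sup>2)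
     + Phi_u a u * (-2 * u\<^sup>2 - 2 * y * (2 * u * (-2 * y * u\<^sup>2))))
   = 4 * a^2 * G_poly a u"
    (is "?lhs = _")
proof -
  define q where "q = (1 - x)\<^sup>2 + y\<^sup>2"
  have uq: "u * q = 1" using u q_def by simp
  have r: "x\<^sup>2 + y\<^sup>2 = 1 - a" using a by simp
  have "x = (2 - a - q) / 2" using a q_def by (simp add: field_simps power2_eq_square)
  then have "u\<^sup>2 * (x\<^sup>2 + y\<^sup>2 - x) = u\<^sup>2 * ((1 - a) - (2 - a - q) / 2)"
    using r by simp
  also have "\<dots> = (u * (u * q) - a * u\<^sup>2) / 2"
    by (simp add: field_simps power2_eq_square)
  finally have s: "u\<^sup>2 * (x\<^sup>2 + y\<^sup>2 - x) = (u - a * u\<^sup>2) / 2"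
    using uq by simp
  \<comment> \<open>the point enters only through \<open>x\<^sup>2 + y\<^sup>2\<close> and \<open>u\<^sup>2 (x\<^sup>2 + y\<^sup>2 - x)\<close>, both expressed by \<open>a\<close> and \<open>u\<close>\<close>
  have "?lhs = 4 * (x\<^sup>2 + y\<^sup>2) * Phi_aa a u + 8 * (u\<^sup>2 * (x\<^sup>2 + y\<^sup>2 - x)) * Phi_au a u
      + 4 * (u^3 * (u * q)) * Phi_uu a u - 4 * Phi_a a u + Phi_u a u * (-4 * u\<^sup>2 + 8 * (u\<^sup>2 * (u * q)))"
    unfolding q_def by (simp add: field_simps power2_eq_square power3_eq_cube)
  also have "\<dots> = 4 * a^2 * G_poly a u"
    unfolding s unfolding r uq Phi_a_def Phi_u_def Phi_aa_def Phi_au_def Phi_uu_def G_poly_def by algebra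
  finally show ?thesis .
qed

lemma invq_mult_sqdist1: "z \<noteq> 1 \<Longrightarrow> invq z * ((1 - Re z)\<^sup>2 + (Im z)\<^sup>2) = 1"
  using sqdist1_pos[of z] unfolding invq_def by (simp add: sqdist1_def[symmetric])

lemma Lap_H2: "z \<noteq> 1 \<Longrightarrow> Lap H2 z = (wt z)\<^sup>2 * G_poly (wt z) (invq z)"
  unfolding Lap_H2_eq_second_derivatives H2_xx_def H2_yy_def
  using second_derivatives_identity[OF wt_def invq_mult_sqdist1] by simp

definition G :: "complex \<Rightarrow> real" where
  "G z = Re (3/2 - 3 / (1 - z)^4)"

lemma Re_inverse_power4:
  assumes "z \<noteq> 1"
  shows "Re (1 / (1 - z)^4) = (((1 - Re z)\<^sup>2 - (Im z)\<^sup>2)\<^sup>2 - 4 * (1 - Re z)\<^sup>2 * (Im z)\<^sup>2) * (invq z)^4"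
proof -
  have "Re (((1 - z)\<^sup>2)\<^sup>2) = ((1 - Re z)\<^sup>2 - (Im z)\<^sup>2)\<^sup>2 - 4 * (1 - Re z)\<^sup>2 * (Im z)\<^sup>2"
    unfolding Re_power2[of "(1 - z)\<^sup>2"] Im_power2[of "1 - z"] Re_power2[of "1 - z"]
    by (simp add: power_mult_distrib power2_eq_square algebra_simps)
  moreover have "(cmod ((1 - z)^4))\<^sup>2 = (sqdist1 z)^4"
    by (simp add: sqdist1_eq_cmod norm_power flip: power_mult)
  ultimately show ?thesis
    by (simp add: Re_divide cmod_power2 invq_def power_one_over flip: power_mult)
qed

lemma G_eq_G_poly:
  assumes "z \<noteq> 1"
  shows "G z = G_poly (wt z) (invq z)"
proof -
  have "G z = 3/2 - 3 * Re (1 / (1 - z)^4)"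
    unfolding G_def by (simp add: Re_divide)
  also have "Re (1 / (1 - z)^4) = (wt z * invq z + 1)^4 / 2 - 2 * invq z * (wt z * invq z + 1)^2 + (invq z)\<^sup>2"
    unfolding Re_inverse_power4[OF assms] using wt_def[of z] invq_mult_sqdist1[OF assms] by algebra
  finally show ?thesis unfolding G_poly_def .
qed

lemma Lap_G: "z \<noteq> 1 \<Longrightarrow> Lap G z = 0"
  unfolding G_def
proof (rule Lap_Re_holomorphic[of "- {1}" _ _ "\<lambda>z. - 12 / (1 - z)^5" "\<lambda>z. - 60 / (1 - z)^6"])
  fix \<zeta> :: complex assume "\<zeta> \<in> - {1}"
  then have "1 - \<zeta> \<noteq> 0" by auto
  then show "((\<lambda>z. 3/2 - 3 / (1 - z)^4) has_field_derivative - 12 / (1 - \<zeta>)^5) (at \<zeta>)"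
    and "((\<lambda>z. - 12 / (1 - z)^5) has_field_derivative - 60 / (1 - \<zeta>)^6) (at \<zeta>)"
    by (auto intro!: derivative_eq_intros, simp_all add: divide_simps)
qed auto

lemma Lap_divide_w_Lap_H2:
  assumes z: "z \<in> ball 0 1"
  shows "Lap (\<lambda>\<zeta>. Lap H2 \<zeta> / w 2 \<zeta>) z = 0"
proof -
  have "Lap H2 \<zeta> / w 2 \<zeta> = G \<zeta>" if "\<zeta> \<in> ball 0 1" for \<zeta>
  proof -
    from that have "(cmod \<zeta>)\<^sup>2 < 1" by (simp add: abs_square_less_1)
    then have "wt \<zeta> > 0" by (simp add: wt_def cmod_power2 diff_diff_eq)
    moreover have "w 2 \<zeta> = (wt \<zeta>)\<^sup>2"
      using calculation by (simp add: w_def wt_def cmod_power2 powr_numeral diff_diff_eq)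
    moreover have "\<zeta> \<noteq> 1" using that by auto
    ultimately show ?thesis using Lap_H2 G_eq_G_poly by simp
  qed
  then have "Lap (\<lambda>\<zeta>. Lap H2 \<zeta> / w 2 \<zeta>) z = Lap G z"
    using z by (intro Lap_cong_open[of "ball 0 1"]) auto
  also have "\<dots> = 0" using z by (intro Lap_G) auto
  finally show ?thesis .
qed

lemma sqdist1_circle_complex:
  assumes "cmod v = r" "r > 0"
  shows "of_real (sqdist1 v) = (1 - v) * (v - of_real (r\<^sup>2)) / v"
proof -
  have "v \<noteq> 0" using assms by auto
  have "v * cnj v = of_real (r\<^sup>2)" using assms complex_norm_square[of v] by simp
  then have "cnj v = of_real (r\<^sup>2) / v" using \<open>v \<noteq> 0\<close> by (simp add: field_simps)
  have "of_real (sqdist1 v) = (1 - v) * cnj (1 - v)"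
    unfolding sqdist1_eq_cmod by (rule complex_norm_square)
  also have "\<dots> = (1 - v) * (v - of_real (r\<^sup>2)) / v"
    using \<open>cnj v = _\<close> \<open>v \<noteq> 0\<close> by (simp add: field_simps)
  finally show ?thesis .
qed

text \<open>On \<open>\<bar>v\<bar> = r\<close> the integrand \<open>\<bar>1 - v\<bar>\<^sup>-\<^sup>2\<^sup>k\<^sup>-\<^sup>2 dt\<close> is \<open>v\<^sup>k / ((1 - v)\<^sup>k\<^sup>+\<^sup>1 (v - r\<^sup>2)\<^sup>k\<^sup>+\<^sup>1) dv / \<i>\<close>,
  so Cauchy's formula for the \<open>k\<close>-th derivative at the pole \<open>r\<^sup>2\<close> evaluates it.\<close>
lemma has_integral_inverse_sqdist1_circle:
  fixes r :: real and g :: "complex \<Rightarrow> complex" and k :: nat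
  assumes r: "0 < r" "r < 1"
    and hol: "g holomorphic_on ball 0 1"
    and g: "\<And>v. cmod v = r \<Longrightarrow> g v = v ^ k / (1 - v) ^ Suc k"
  shows "((\<lambda>t. 1 / sqdist1 (of_real r * cis t) ^ Suc k) has_integral
           2 * pi * Re ((deriv ^^ k) g (of_real (r\<^sup>2)) / fact k)) {0..2*pi}"
proof -
  have sub: "cball 0 r \<subseteq> ball (0::complex) 1" using r by auto
  have "continuous_on (cball 0 r) g"
    using holomorphic_on_imp_continuous_on[OF hol] sub continuous_on_subset by blast
  moreover have "g holomorphic_on ball 0 r"
    using hol sub by (meson ball_subset_cball holomorphic_on_subset subset_trans)
  moreover have "r\<^sup>2 < r" using r by (simp add: power2_eq_square)
  then have "of_real (r\<^sup>2) \<in> ball (0::complex) r"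
    using r by (simp add: norm_power)
  ultimately have "((\<lambda>u. g u / (u - of_real (r\<^sup>2)) ^ Suc k) has_contour_integral
      (2 * pi * \<i>) / fact k * (deriv ^^ k) g (of_real (r\<^sup>2))) (part_circlepath 0 r 0 (2*pi))"
    using Cauchy_has_contour_integral_higher_derivative_circlepath by (simp add: circlepath_def)
  then have I: "((\<lambda>t. g (0 + of_real r * cis t) / (0 + of_real r * cis t - of_real (r\<^sup>2)) ^ Suc k
        * of_real r * \<i> * cis t)
      has_integral (2 * pi * \<i>) / fact k * (deriv ^^ k) g (of_real (r\<^sup>2))) {0..2*pi}"
    by (subst (asm) has_contour_integral_part_circlepath_iff) auto
  have integrand: "g (0 + of_real r * cis t) / (0 + of_real r * cis t - of_real (r\<^sup>2)) ^ Suc k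
      * of_real r * \<i> * cis t = \<i> * of_real (1 / sqdist1 (of_real r * cis t) ^ Suc k)" for t
  proof -
    define v where "v = of_real r * cis t"
    have v: "cmod v = r" using r unfolding v_def by (simp add: norm_mult)
    have "of_real (1 / sqdist1 v ^ Suc k) = 1 / ((1 - v) * (v - of_real (r\<^sup>2)) / v) ^ Suc k"
      using sqdist1_circle_complex[OF v r(1)] by (metis of_real_1 of_real_divide of_real_power)
    also have "\<dots> = v ^ Suc k / ((1 - v) ^ Suc k * (v - of_real (r\<^sup>2)) ^ Suc k)"
      by (simp add: power_divide power_mult_distrib)
    finally have "of_real (1 / sqdist1 v ^ Suc k) = \<dots>" .
    moreover have "g v / (v - of_real (r\<^sup>2)) ^ Suc k * of_real r * \<i> * cis t
        = \<i> * (g v / (v - of_real (r\<^sup>2)) ^ Suc k * v)"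
      unfolding v_def by (simp add: ac_simps)
    ultimately show ?thesis
      using g[OF v] unfolding v_def[symmetric]
      by (simp add: divide_divide_eq_left power_Suc2 del: power_Suc)
  qed
  from has_integral_mult_right[OF I[unfolded integrand], of "- \<i>"]
  have "((\<lambda>t. of_real (1 / sqdist1 (of_real r * cis t) ^ Suc k))
      has_integral of_real (2 * pi) * ((deriv ^^ k) g (of_real (r\<^sup>2)) / fact k)) {0..2*pi}"
    by (simp add: field_simps)
  note Re_integral = has_integral_linear[OF this bounded_linear_Re]
  have Re_of_real_mult: "Re (of_real c * y) = c * Re y" for c y
    by simp
  from Re_integral show ?thesis
    by (simp only: o_def Re_complex_of_real Re_of_real_mult)
qed

lemma has_integral_inverse_sqdist1_circle_1:
  assumes "0 < r" "r < 1"
  shows "((\<lambda>t. 1 / sqdist1 (of_real r * cis t)) has_integral 2 * pi / (1 - r\<^sup>2)) {0..2*pi}"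
proof -
  have "(\<lambda>v. 1 / (1 - v)) holomorphic_on ball 0 1"
    by (auto intro!: holomorphic_intros)
  moreover have "Re (1 / (1 - complex_of_real (r\<^sup>2))) = 1 / (1 - r\<^sup>2)"
    by (metis Re_complex_of_real of_real_1 of_real_diff of_real_divide)
  ultimately show ?thesis
    using has_integral_inverse_sqdist1_circle[OF assms, of "\<lambda>v. 1 / (1 - v)" 0] by simp
qed

lemma has_integral_inverse_sqdist1_circle_2:
  assumes "0 < r" "r < 1"
  shows "((\<lambda>t. 1 / sqdist1 (of_real r * cis t) ^ 2) has_integral
           2 * pi * (1 + r\<^sup>2) / (1 - r\<^sup>2)^3) {0..2*pi}"
proof -
  let ?g = "\<lambda>v::complex. v / (1 - v)\<^sup>2"
  define \<rho> where "\<rho> = complex_of_real (r\<^sup>2)"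
  have "r\<^sup>2 < 1" using assms by (simp add: power_less_one_iff)
  then have "1 - \<rho> \<noteq> 0" unfolding \<rho>_def by (metis eq_iff_diff_eq_0 of_real_eq_1_iff less_irrefl)
  then have "(?g has_field_derivative (1 + \<rho>) / (1 - \<rho>)^3) (at \<rho>)"
    by (auto intro!: derivative_eq_intros, simp add: divide_simps, algebra)
  then have "(deriv ^^ 1) ?g \<rho> = complex_of_real ((1 + r\<^sup>2) / (1 - r\<^sup>2)^3)"
    unfolding \<rho>_def by (simp add: DERIV_imp_deriv)
  moreover have "?g holomorphic_on ball 0 1"
    by (auto intro!: holomorphic_intros)
  ultimately show ?thesis
    using has_integral_inverse_sqdist1_circle[OF assms, of ?g 1] unfolding \<rho>_def
    by (simp add: numeral_2_eq_2)
qed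

lemma has_integral_inverse_sqdist1_circle_3:
  assumes "0 < r" "r < 1"
  shows "((\<lambda>t. 1 / sqdist1 (of_real r * cis t) ^ 3) has_integral
           2 * pi * (1 + 4 * r\<^sup>2 + r^4) / (1 - r\<^sup>2)^5) {0..2*pi}"
proof -
  let ?g = "\<lambda>v::complex. v\<^sup>2 / (1 - v)^3"
  let ?g' = "\<lambda>v::complex. (2 * v + v\<^sup>2) / (1 - v)^4"
  define \<rho> where "\<rho> = complex_of_real (r\<^sup>2)"
  have "r\<^sup>2 < 1" using assms by (simp add: power_less_one_iff)
  then have \<rho>: "\<rho> \<in> ball 0 1" unfolding \<rho>_def by (simp add: norm_power)
  have deriv_g: "deriv ?g v = ?g' v" if "v \<in> ball 0 1" for v
  proof -
    have "1 - v \<noteq> 0" using that by auto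
    then have "(?g has_field_derivative ?g' v) (at v)"
      by (auto intro!: derivative_eq_intros, simp add: divide_simps, algebra)
    then show ?thesis by (rule DERIV_imp_deriv)
  qed
  have "1 - \<rho> \<noteq> 0" using \<rho> by auto
  then have "(?g' has_field_derivative (2 + 8 * \<rho> + 2 * \<rho>\<^sup>2) / (1 - \<rho>)^5) (at \<rho>)"
    by (auto intro!: derivative_eq_intros, simp add: divide_simps, algebra)
  moreover have "eventually (\<lambda>v. deriv ?g v = ?g' v) (nhds \<rho>)"
    using deriv_g eventually_nhds_in_open[OF open_ball \<rho>] by (auto elim: eventually_mono)
  ultimately have "(deriv ^^ 2) ?g \<rho> = (2 + 8 * \<rho> + 2 * \<rho>\<^sup>2) / (1 - \<rho>)^5"
    by (simp add: numeral_2_eq_2 deriv_cong_ev DERIV_imp_deriv)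
  then have second_deriv: "(deriv ^^ 2) ?g \<rho> / fact 2 = of_real ((1 + 4 * r\<^sup>2 + r^4) / (1 - r\<^sup>2)^5)"
    using \<open>1 - \<rho> \<noteq> 0\<close> unfolding \<rho>_def by (simp add: field_simps flip: power_mult)
  have "?g holomorphic_on ball 0 1"
    by (auto intro!: holomorphic_intros)
  moreover have "?g v = v ^ 2 / (1 - v) ^ Suc 2" for v
    by simp
  ultimately have "((\<lambda>t. 1 / sqdist1 (of_real r * cis t) ^ Suc 2) has_integral
      2 * pi * Re ((deriv ^^ 2) ?g \<rho> / fact 2)) {0..2*pi}"
    unfolding \<rho>_def by (rule has_integral_inverse_sqdist1_circle[OF assms])
  then show ?thesis
    unfolding second_deriv Re_complex_of_real by (simp add: numeral_3_eq_3)
qed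

lemma sin_ge_third:
  fixes x :: real
  assumes "0 \<le> x" "x \<le> 2"
  shows "x / 3 \<le> sin x"
proof -
  have "\<bar>sin x - (\<Sum>m<3. sin_coeff m * x ^ m)\<bar> \<le> inverse (fact 3) * \<bar>x\<bar> ^ 3"
    by (rule Maclaurin_sin_bound)
  moreover have "(\<Sum>m<3. sin_coeff m * x ^ m) = x"
    by (simp add: numeral_3_eq_3 sin_coeff_def)
  moreover have "inverse (fact 3) * \<bar>x\<bar> ^ 3 = x^3 / 6"
    using assms by (simp add: numeral_3_eq_3)
  moreover have "x^3 \<le> 4 * x"
  proof -
    have "x * x \<le> 2 * 2" using assms by (intro mult_mono) auto
    then have "x * x * x \<le> 4 * x" using assms(1) by (simp add: mult_right_mono)
    then show ?thesis by (simp add: power3_eq_cube)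
  qed
  ultimately show ?thesis by linarith
qed

lemma angle_le_chord:
  assumes "0 \<le> t" "t \<le> 2 * pi"
  shows "min t (2 * pi - t) \<le> 3 * cmod (1 - cis t)"
proof -
  have "(cmod (1 - cis t))\<^sup>2 = (1 - cos t)\<^sup>2 + (sin t)\<^sup>2"
    by (simp add: cmod_power2)
  also have "\<dots> = 2 - 2 * cos t"
    using sin_cos_squared_add[of t] by (simp add: power2_eq_square algebra_simps)
  also have "\<dots> = (2 * \<bar>sin (t/2)\<bar>)\<^sup>2"
    using cos_double_sin[of "t/2"] by (simp add: power_mult_distrib)
  finally have chord: "cmod (1 - cis t) = 2 * \<bar>sin (t/2)\<bar>"
    using power2_eq_iff_nonneg[of "cmod (1 - cis t)" "2 * \<bar>sin (t/2)\<bar>"] by simp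
  have "pi / 2 \<le> 2" using pi_less_4 by simp
  show ?thesis
  proof (cases "t \<le> pi")
    case True
    then have "t/2/3 \<le> sin (t/2)" using assms \<open>pi / 2 \<le> 2\<close> by (intro sin_ge_third) auto
    then show ?thesis using chord by simp
  next
    case False
    then have "(2*pi - t)/2/3 \<le> sin ((2*pi - t)/2)" using assms \<open>pi / 2 \<le> 2\<close> by (intro sin_ge_third) auto
    also have "sin ((2*pi - t)/2) = sin (t/2)"
      using sin_pi_minus[of "t/2"] by (simp add: diff_divide_distrib)
    finally show ?thesis using chord by simp
  qed
qed

lemma test_fun_T_continuous_on: "test_fun_T \<phi> \<Longrightarrow> continuous_on S \<phi>"
  unfolding test_fun_T_def
  by (meson continuous_at_imp_continuous_on differentiable_imp_continuous_within smooth_real.cases)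

lemma test_fun_T_lipschitz:
  assumes "test_fun_T \<phi>"
  obtains C where "C \<ge> 0"
    "\<And>x y. x \<in> {0..2*pi} \<Longrightarrow> y \<in> {0..2*pi} \<Longrightarrow> \<bar>\<phi> x - \<phi> y\<bar> \<le> C * \<bar>x - y\<bar>"
proof -
  from assms have "smooth_real \<phi>"
    unfolding test_fun_T_def by auto
  then have dif: "\<And>x. \<phi> differentiable (at x)" and "smooth_real (deriv \<phi>)"
    by (auto elim: smooth_real.cases)
  from \<open>smooth_real (deriv \<phi>)\<close> have "\<And>x. deriv \<phi> differentiable (at x)"
    by (auto elim: smooth_real.cases)
  then have "continuous_on {0..2*pi} (deriv \<phi>)"
    by (meson continuous_at_imp_continuous_on differentiable_imp_continuous_within)
  then have "bounded (deriv \<phi> ` {0..2*pi})"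
    by (intro compact_imp_bounded compact_continuous_image) auto
  then obtain C where C: "\<And>x. x \<in> {0..2*pi} \<Longrightarrow> norm (deriv \<phi> x) \<le> C"
    unfolding bounded_iff by blast
  have D: "(\<phi> has_field_derivative deriv \<phi> x) (at x within {0..2*pi})" for x
    using dif DERIV_deriv_iff_real_differentiable has_field_derivative_at_within by blast
  show ?thesis
  proof
    show "C \<ge> 0" using C[of 0] norm_ge_zero[of "deriv \<phi> 0"] by simp
    show "\<bar>\<phi> x - \<phi> y\<bar> \<le> C * \<bar>x - y\<bar>" if "x \<in> {0..2*pi}" "y \<in> {0..2*pi}" for x y
      using field_differentiable_bound[OF convex_real_interval(5) D C that] by simp
  qed
qed

text \<open>Periodicity lets the distance to \<open>0\<close> be measured both ways round the circle.\<close>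
lemma test_fun_T_chord_bound:
  assumes "test_fun_T \<phi>"
  obtains B where "B \<ge> 0" "\<And>t. t \<in> {0..2*pi} \<Longrightarrow> \<bar>\<phi> t - \<phi> 0\<bar> \<le> B * cmod (1 - cis t)"
proof -
  obtain C where "C \<ge> 0"
    and lip: "\<And>x y. x \<in> {0..2*pi} \<Longrightarrow> y \<in> {0..2*pi} \<Longrightarrow> \<bar>\<phi> x - \<phi> y\<bar> \<le> C * \<bar>x - y\<bar>"
    using test_fun_T_lipschitz[OF assms] by blast
  have "\<phi> (0 + 2 * pi) = \<phi> 0"
    using assms unfolding test_fun_T_def by blast
  show ?thesis
  proof
    show "0 \<le> 3 * C" using \<open>C \<ge> 0\<close> by simp
    fix t assume t: "t \<in> {0..2*pi}"
    have "\<bar>\<phi> t - \<phi> 0\<bar> \<le> C * t" using lip[OF t, of 0] t by auto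
    moreover have "\<bar>\<phi> t - \<phi> 0\<bar> \<le> C * (2*pi - t)"
      using lip[OF t, of "2*pi"] t \<open>\<phi> (0 + 2 * pi) = \<phi> 0\<close> by auto
    ultimately have "\<bar>\<phi> t - \<phi> 0\<bar> \<le> C * min t (2*pi - t)"
      by (simp add: min_def)
    also have "\<dots> \<le> C * (3 * cmod (1 - cis t))"
      using angle_le_chord t \<open>C \<ge> 0\<close> by (intro mult_left_mono) auto
    finally show "\<bar>\<phi> t - \<phi> 0\<bar> \<le> 3 * C * cmod (1 - cis t)" by simp
  qed
qed

lemma chord_le_sqdist1_circle:
  assumes "0 < r" "r < 1"
  shows "cmod (1 - cis t) \<le> sqdist1 (of_real r * cis t) / (2 * (1 - r)) + 3 * (1 - r) / 2"
proof -
  define d where "d = 1 - r"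
  define c where "c = cmod (1 - of_real r * cis t)"
  have "d > 0" using assms d_def by simp
  have "cmod (1 - cis t) \<le> c + cmod (of_real r * cis t - cis t)"
    unfolding c_def using norm_triangle_ineq[of "1 - of_real r * cis t" "of_real r * cis t - cis t"] by simp
  also have "cmod (of_real r * cis t - cis t) = d"
  proof -
    have "of_real r * cis t - cis t = of_real (r - 1) * cis t" by (simp add: algebra_simps)
    then have "cmod (of_real r * cis t - cis t) = \<bar>r - 1\<bar>"
      by (simp only: norm_mult norm_of_real norm_cis mult_1_right)
    then show ?thesis using assms unfolding d_def by simp
  qed
  \<comment> \<open>AM-GM: \<open>c \<le> c\<^sup>2 / (2 d) + d / 2\<close>\<close>
  also have "c \<le> c\<^sup>2 / (2 * d) + d / 2"
  proof -
    have "0 \<le> (c - d)\<^sup>2" by simp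
    then have "2 * d * c \<le> c\<^sup>2 + d\<^sup>2" by (simp add: power2_eq_square algebra_simps)
    then show ?thesis using \<open>d > 0\<close> by (simp add: field_simps power2_eq_square)
  qed
  finally show ?thesis
    unfolding c_def d_def sqdist1_eq_cmod by (simp add: field_simps)
qed

definition coef1 :: "real \<Rightarrow> real" where "coef1 r = (1 - r\<^sup>2)^4 / 2"
definition coef2 :: "real \<Rightarrow> real" where "coef2 r = (1 - r\<^sup>2)^5 / 2 - (1 - r\<^sup>2)^4 / 4"
definition coef2_abs :: "real \<Rightarrow> real" where "coef2_abs r = (1 - r\<^sup>2)^5 / 2 + (1 - r\<^sup>2)^4 / 4"
definition coef3 :: "real \<Rightarrow> real" where "coef3 r = (1 - r\<^sup>2)^6 / 6"

lemma H2_circle: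
  fixes r t :: real
  assumes "0 \<le> r"
  defines "q \<equiv> sqdist1 (of_real r * cis t)"
  shows "H2 (of_real r * cis t) = coef1 r * (1 / q) + coef2 r * (1 / q^2) + coef3 r * (1 / q^3)"
proof -
  have wt_circle: "wt (of_real r * cis t) = 1 - r\<^sup>2"
    using assms by (simp add: wt_eq_cmod norm_mult)
  have "Phi (1 - r\<^sup>2) u = coef1 r * u + coef2 r * u^2 + coef3 r * u^3" for u
    unfolding Phi_def coef1_def coef2_def coef3_def by (simp add: field_simps)
  from this[of "1 / q"] show ?thesis
    unfolding H2_eq_Phi wt_circle invq_def q_def[symmetric] by (simp add: power_one_over)
qed

definition circle_moments :: "real \<Rightarrow> real \<Rightarrow> real \<Rightarrow> real \<Rightarrow> real \<Rightarrow> real" where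
  "circle_moments c0 c1 c2 c3 r = c0 * (2 * pi) + c1 * (2 * pi / (1 - r\<^sup>2))
     + c2 * (2 * pi * (1 + r\<^sup>2) / (1 - r\<^sup>2)^3) + c3 * (2 * pi * (1 + 4 * r\<^sup>2 + r^4) / (1 - r\<^sup>2)^5)"

lemma has_integral_circle_moments:
  assumes "0 < r" "r < 1"
  defines "q \<equiv> \<lambda>t. sqdist1 (of_real r * cis t)"
  shows "((\<lambda>t. c0 + c1 * (1 / q t) + c2 * (1 / q t ^ 2) + c3 * (1 / q t ^ 3)) has_integral
      circle_moments c0 c1 c2 c3 r) {0..2*pi}"
proof -
  have "((\<lambda>t. c0) has_integral c0 * (2 * pi)) {0..2*pi}"
    using has_integral_const_real[of c0 0 "2*pi"] by (simp add: mult.commute)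
  then show ?thesis
    unfolding circle_moments_def q_def
    by (intro has_integral_add has_integral_mult_right has_integral_inverse_sqdist1_circle_1
        has_integral_inverse_sqdist1_circle_2 has_integral_inverse_sqdist1_circle_3 assms)
qed

definition H2_mass :: "real \<Rightarrow> real" where
  "H2_mass r = circle_moments 0 (coef1 r) (coef2 r) (coef3 r) r"

text \<open>Integral of the majorant of \<open>\<bar>H2 (r e\<^sup>i\<^sup>t)\<bar> \<bar>1 - e\<^sup>i\<^sup>t\<bar>\<close> from the next lemma.\<close>
definition H2_deviation :: "real \<Rightarrow> real" where
  "H2_deviation r = circle_moments (coef1 r / (2 * (1 - r)))
     (coef2_abs r / (2 * (1 - r)) + 3 * (1 - r) / 2 * coef1 r)
     (coef3 r / (2 * (1 - r)) + 3 * (1 - r) / 2 * coef2_abs r) (3 * (1 - r) / 2 * coef3 r) r"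

lemma abs_H2_circle_mult_chord_le:
  fixes r t :: real
  assumes r: "0 < r" "r < 1"
  defines "q \<equiv> sqdist1 (of_real r * cis t)" and "d \<equiv> 1 - r"
  shows "\<bar>H2 (of_real r * cis t)\<bar> * cmod (1 - cis t) \<le> coef1 r / (2 * d)
     + (coef2_abs r / (2 * d) + 3 * d / 2 * coef1 r) * (1 / q)
     + (coef3 r / (2 * d) + 3 * d / 2 * coef2_abs r) * (1 / q^2) + 3 * d / 2 * coef3 r * (1 / q^3)"
proof -
  have "cmod (of_real r * cis t) = r" using r by (simp add: norm_mult)
  then have "q > 0" using r unfolding q_def by (intro sqdist1_pos) auto
  have "d > 0" using r unfolding d_def by simp
  have "0 \<le> 1 - r\<^sup>2" using r by (simp add: power_le_one)
  then have coefs: "0 \<le> coef1 r" "0 \<le> coef3 r" "\<bar>coef2 r\<bar> \<le> coef2_abs r"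
    unfolding coef1_def coef2_def coef2_abs_def coef3_def by (auto simp: abs_le_iff)
  define T where "T = coef1 r * (1 / q) + coef2_abs r * (1 / q^2) + coef3 r * (1 / q^3)"
  have "\<bar>H2 (of_real r * cis t)\<bar> \<le> \<bar>coef1 r * (1 / q)\<bar> + \<bar>coef2 r * (1 / q^2)\<bar> + \<bar>coef3 r * (1 / q^3)\<bar>"
    unfolding H2_circle[OF less_imp_le[OF r(1)]] q_def by linarith
  also have "\<dots> \<le> T"
    unfolding T_def using coefs \<open>q > 0\<close> by (simp add: abs_mult divide_right_mono)
  finally have "\<bar>H2 (of_real r * cis t)\<bar> * cmod (1 - cis t) \<le> T * (q / (2 * d) + 3 * d / 2)"
    using chord_le_sqdist1_circle[OF r, of t] unfolding q_def d_def
    by (intro mult_mono) (auto simp: T_def coefs)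
  also have "\<dots> = coef1 r / (2 * d)
     + (coef2_abs r / (2 * d) + 3 * d / 2 * coef1 r) * (1 / q)
     + (coef3 r / (2 * d) + 3 * d / 2 * coef2_abs r) * (1 / q^2) + 3 * d / 2 * coef3 r * (1 / q^3)"
    unfolding T_def using \<open>q > 0\<close> \<open>d > 0\<close> by (simp add: field_simps power2_eq_square power3_eq_cube)
  finally show ?thesis .
qed

lemma has_integral_H2_circle:
  assumes "0 < r" "r < 1"
  shows "((\<lambda>t. H2 (of_real r * cis t)) has_integral H2_mass r) {0..2*pi}"
  using has_integral_circle_moments[OF assms, of 0 "coef1 r" "coef2 r" "coef3 r"] assms
  unfolding H2_mass_def by (simp add: H2_circle)

lemma continuous_on_H2_circle:
  assumes "0 \<le> r" "r < 1"
  shows "continuous_on S (\<lambda>t. H2 (of_real r * cis t))"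
proof -
  have "sqdist1 (of_real r * cis t) \<noteq> 0" for t
  proof -
    have "cmod (of_real r * cis t) = r" using assms by (simp add: norm_mult)
    then have "of_real r * cis t \<noteq> 1" using assms by auto
    then show ?thesis using sqdist1_pos by fastforce
  qed
  then show ?thesis
    using assms unfolding H2_circle[OF assms(1)] sqdist1_def
    by (intro continuous_intros) auto
qed

lemma abs_integral_H2_circle_deviation_le:
  assumes r: "0 < r" "r < 1" and \<phi>: "continuous_on {0..2*pi} \<phi>"
    and B: "B \<ge> 0" "\<And>t. t \<in> {0..2*pi} \<Longrightarrow> \<bar>\<phi> t - \<phi> 0\<bar> \<le> B * cmod (1 - cis t)"
  shows "\<bar>integral {0..2*pi} (\<lambda>t. H2 (of_real r * cis t) * (\<phi> t - \<phi> 0))\<bar> \<le> B * H2_deviation r"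
proof -
  define d where "d = 1 - r"
  define q where "q t = sqdist1 (of_real r * cis t)" for t
  define U where "U t = coef1 r / (2 * d) + (coef2_abs r / (2 * d) + 3 * d / 2 * coef1 r) * (1 / q t)
      + (coef3 r / (2 * d) + 3 * d / 2 * coef2_abs r) * (1 / q t ^ 2) + 3 * d / 2 * coef3 r * (1 / q t ^ 3)"
    for t
  have U: "((\<lambda>t. B * U t) has_integral B * H2_deviation r) {0..2*pi}"
    unfolding U_def H2_deviation_def d_def q_def
    by (intro has_integral_mult_right has_integral_circle_moments r)
  have "(\<lambda>t. H2 (of_real r * cis t) * (\<phi> t - \<phi> 0)) integrable_on {0..2*pi}"
    using r by (intro integrable_continuous_interval continuous_intros continuous_on_H2_circle \<phi>) auto
  moreover have "norm (H2 (of_real r * cis t) * (\<phi> t - \<phi> 0)) \<le> B * U t" if "t \<in> {0..2*pi}" for t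
  proof -
    have "norm (H2 (of_real r * cis t) * (\<phi> t - \<phi> 0)) \<le> \<bar>H2 (of_real r * cis t)\<bar> * (B * cmod (1 - cis t))"
      unfolding real_norm_def abs_mult using B(2)[OF that] by (intro mult_left_mono) auto
    also have "\<dots> = B * (\<bar>H2 (of_real r * cis t)\<bar> * cmod (1 - cis t))"
      by simp
    also have "\<dots> \<le> B * U t"
      unfolding U_def q_def d_def using abs_H2_circle_mult_chord_le[OF r] B(1) by (intro mult_left_mono)
    finally show ?thesis .
  qed
  ultimately have "norm (integral {0..2*pi} (\<lambda>t. H2 (of_real r * cis t) * (\<phi> t - \<phi> 0)))
      \<le> integral {0..2*pi} (\<lambda>t. B * U t)"
    using U by (intro integral_norm_bound_integral) (auto simp: has_integral_integrable)
  with integral_unique[OF U] show ?thesis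
    by (simp only: real_norm_def)
qed

lemma pair_r_H2_normal_estimate:
  assumes r: "0 < r" "r < 1" and \<phi>: "continuous_on {0..2*pi} \<phi>"
    and B: "B \<ge> 0" "\<And>t. t \<in> {0..2*pi} \<Longrightarrow> \<bar>\<phi> t - \<phi> 0\<bar> \<le> B * cmod (1 - cis t)"
  shows "\<bar>pair_r H2 r \<phi> / (1 - r) - \<phi> 0\<bar>
    \<le> \<bar>\<phi> 0\<bar> * \<bar>H2_mass r / (2 * pi * (1 - r)) - 1\<bar> + B * (H2_deviation r / (2 * pi * (1 - r)))"
proof -
  define R where "R = integral {0..2*pi} (\<lambda>t. H2 (of_real r * cis t) * (\<phi> t - \<phi> 0))"
  define K where "K = 2 * pi * (1 - r)"
  have "K > 0" using r unfolding K_def by simp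
  have "(\<lambda>t. \<phi> 0 * H2 (of_real r * cis t)) integrable_on {0..2*pi}"
    "(\<lambda>t. H2 (of_real r * cis t) * (\<phi> t - \<phi> 0)) integrable_on {0..2*pi}"
    using r by (auto intro!: integrable_continuous_interval continuous_intros continuous_on_H2_circle \<phi>)
  then have "integral {0..2*pi} (\<lambda>t. H2 (of_real r * cis t) * \<phi> t) = \<phi> 0 * H2_mass r + R"
    unfolding R_def integral_unique[OF has_integral_H2_circle[OF r], symmetric]
    by (simp add: algebra_simps flip: integral_add integral_mult_right)
  then have "pair_r H2 r \<phi> / (1 - r) = (\<phi> 0 * H2_mass r + R) / K"
    unfolding pair_r_def K_def by simp
  also have "\<dots> = \<phi> 0 * (H2_mass r / K - 1) + R / K + \<phi> 0"
    using \<open>K > 0\<close> by (simp add: field_simps)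
  finally have "pair_r H2 r \<phi> / (1 - r) - \<phi> 0 = \<phi> 0 * (H2_mass r / K - 1) + R / K"
    by simp
  also have "\<bar>\<dots>\<bar> \<le> \<bar>\<phi> 0\<bar> * \<bar>H2_mass r / K - 1\<bar> + \<bar>R\<bar> / K"
    using \<open>K > 0\<close> by (simp add: abs_mult abs_triangle_ineq[THEN order_trans])
  also have "\<bar>R\<bar> / K \<le> B * H2_deviation r / K"
    unfolding R_def using abs_integral_H2_circle_deviation_le[OF r \<phi> B] \<open>K > 0\<close>
    by (intro divide_right_mono) auto
  finally show ?thesis unfolding K_def by simp
qed

lemma tendsto_H2_mass: "((\<lambda>r. H2_mass r / (2 * pi * (1 - r))) \<longlongrightarrow> 1) (at_left 1)"
  unfolding H2_mass_def circle_moments_def coef1_def coef2_def coef3_def by real_asymp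

lemma tendsto_H2_deviation: "((\<lambda>r. H2_deviation r / (2 * pi * (1 - r))) \<longlongrightarrow> 0) (at_left 1)"
  unfolding H2_deviation_def circle_moments_def coef1_def coef2_abs_def coef3_def by real_asymp

lemma normal_derivative_H2:
  assumes "test_fun_T \<phi>"
  shows "((\<lambda>r. (pair_r H2 r \<phi> - 0) / (1 - r)) \<longlongrightarrow> \<phi> 0) (at_left 1)"
proof -
  obtain B where B: "B \<ge> 0" "\<And>t. t \<in> {0..2*pi} \<Longrightarrow> \<bar>\<phi> t - \<phi> 0\<bar> \<le> B * cmod (1 - cis t)"
    using test_fun_T_chord_bound[OF assms] by blast
  define g where "g r = \<bar>\<phi> 0\<bar> * \<bar>H2_mass r / (2 * pi * (1 - r)) - 1\<bar> + B * (H2_deviation r / (2 * pi * (1 - r)))"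
    for r
  have "(g \<longlongrightarrow> \<bar>\<phi> 0\<bar> * \<bar>1 - 1\<bar> + B * 0) (at_left 1)"
    unfolding g_def by (intro tendsto_intros tendsto_H2_mass tendsto_H2_deviation)
  then have g: "(g \<longlongrightarrow> 0) (at_left 1)" by simp
  have "eventually (\<lambda>r. r \<in> {0<..<1}) (at_left (1::real))"
    by (rule eventually_at_left_real) simp
  then have "eventually (\<lambda>r. norm ((pair_r H2 r \<phi> - 0) / (1 - r) - \<phi> 0) \<le> g r) (at_left 1)"
  proof eventually_elim
    case (elim r)
    then show ?case
      using pair_r_H2_normal_estimate[of r \<phi> B] test_fun_T_continuous_on[OF assms] B
      unfolding g_def by simp
  qed
  from Lim_null_comparison[OF this g]
  have "((\<lambda>r. (pair_r H2 r \<phi> - 0) / (1 - r) - \<phi> 0) \<longlongrightarrow> 0) (at_left 1)" .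
  then show ?thesis by (simp add: LIM_zero_cancel)
qed

lemma boundary_value_H2:
  assumes "test_fun_T \<phi>"
  shows "((\<lambda>r. pair_r H2 r \<phi>) \<longlongrightarrow> 0) (at_left 1)"
proof -
  have "eventually (\<lambda>r. r \<in> {0<..<1}) (at_left (1::real))"
    by (rule eventually_at_left_real) simp
  then have "eventually (\<lambda>r. (pair_r H2 r \<phi> - 0) / (1 - r) * (1 - r) = pair_r H2 r \<phi>) (at_left 1)"
    by eventually_elim auto
  moreover have "((\<lambda>r. (pair_r H2 r \<phi> - 0) / (1 - r) * (1 - r)) \<longlongrightarrow> \<phi> 0 * (1 - 1)) (at_left 1)"
    by (intro tendsto_intros normal_derivative_H2[OF assms])
  ultimately show ?thesis
    by (simp add: Lim_transform_eventually)
qed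

theorem theorem3p1:
  shows "is_poisson_kernel 2 (\<lambda>z.
      (1/2) * (1 - (cmod z)\<^sup>2) ^ 4 / (cmod (1 - z))\<^sup>2
    + (1/2) * (1 - (cmod z)\<^sup>2) ^ 5 / (cmod (1 - z)) ^ 4
    - (1/4) * (1 - (cmod z)\<^sup>2) ^ 4 / (cmod (1 - z)) ^ 4
    + (1/6) * (1 - (cmod z)\<^sup>2) ^ 6 / (cmod (1 - z)) ^ 6)"
proof -
  have "is_poisson_kernel 2 H2"
    unfolding is_poisson_kernel_def
    using smooth_on_H2 Lap_divide_w_Lap_H2 boundary_value_H2 normal_derivative_H2 by blast
  then show ?thesis unfolding H2_def[abs_def] .
qed

end
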